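(* For $n_1,n_2\ge 1$ and irreducible vectors $\vec{\mathsf b}\in\mathrm{Vec}(\mathrm{E(NE)}^{n_1-1})$, $\vec{\mathsf b}'\in\mathrm{Vec}(\mathrm{E(NE)}^{n_2-1})$, define $$\vec{\mathsf b}+\vec{\mathsf b}'=(\mathsf b_0,\dots,\mathsf b_{2n_1-1},\ \mathsf b'_0+n_1,\dots,\mathsf b'_{2n_2-1}+n_1)\in\mathrm{Vec}(\mathrm{E(NE)}^{n_1+n_2-1}).$$ Then every $\vec{\mathsf b}\in\mathrm{Vec}(\mathrm{E(NE)}^{n-1})$ ($n\ge1$) can be written as a sum $\vec{\mathsf b}^{(1)}+\cdots+\vec{\mathsf b}^{(r)}$ of irreducible vectors $\vec{\mathsf b}^{(i)}\in\mathrm{Vec}(\mathrm{E(NE)}^{k_i-1})$ with $k_1+\cdots+k_r=n$ (the sum being taken left to right, with the shift by the total size of the preceding summands). Moreover, $\vec{\mathsf b}$ is $t$-$\mathsf{Pop}$-sortable in $\mathrm{Vec}(\mathrm{E(NE)}^{n-1})$ if and only if each $\vec{\mathsf b}^{(i)}$ is $t$-$\mathsf{Pop}$-sortable in $\mathrm{Vec}(\mathrm{E(NE)}^{k_i-1})$.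
   Context: For $\nu=\mathrm{E(NE)}^{n-1}$ (a path of $2n-1$ steps ending at height $n-1$), $\mathrm{Vec}(\nu)$ is the set of integer vectors $(\mathsf b_0,\dots,\mathsf b_{2n-1})$ with $\mathsf b_{2k+1}=k$ for $0\le k\le n-1$, $\lfloor i/2\rfloor\le\mathsf b_i\le n-1$ for all $i$, and such that $\mathsf b_i=k$ implies $\mathsf b_j\le k$ for all $i+1\le j\le 2k+1$. With the componentwise order it is a finite lattice isomorphic to the Tamari lattice $\mathrm{Tam}_n$. A vector is irreducible if $\mathsf b_0=\mathsf b_{2n-1}$ (i.e. $\mathsf b_0=n-1$). For a finite lattice $M$ with minimum $\hat0$, $\mathsf{Pop}_M(x)=\bigwedge(\{y: y\lessdot x\}\cup\{x\})$ and $x$ is $t$-$\mathsf{Pop}$-sortable if $\mathsf{Pop}_M^t(x)=\hat 0$. *)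

theory Defs
  imports Main
begin

text \<open>Vectors (b_0,...,b_{2n-1}) are lists of length 2n.  Vec n is Vec(E(NE)^(n-1)).\<close>
definition Vec :: "nat \<Rightarrow> nat list set" where
  "Vec n = {b. length b = 2 * n
     \<and> (\<forall>k<n. b ! (2 * k + 1) = k)
     \<and> (\<forall>i<2 * n. i div 2 \<le> b ! i \<and> b ! i \<le> n - 1)
     \<and> (\<forall>i<2 * n. \<forall>j. i + 1 \<le> j \<and> j \<le> 2 * (b ! i) + 1 \<longrightarrow> b ! j \<le> b ! i)}"

definition vle :: "nat list \<Rightarrow> nat list \<Rightarrow> bool" where
  "vle x y = list_all2 (\<le>) x y"

definition vless :: "nat list \<Rightarrow> nat list \<Rightarrow> bool" where
  "vless x y = (vle x y \<and> x \<noteq> y)"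

definition irreducible_vec :: "nat \<Rightarrow> nat list \<Rightarrow> bool" where
  "irreducible_vec n b = (b ! 0 = b ! (2 * n - 1))"

definition covered_by :: "nat list set \<Rightarrow> nat list \<Rightarrow> nat list \<Rightarrow> bool" where
  "covered_by M y x = (y \<in> M \<and> x \<in> M \<and> vless y x \<and> \<not> (\<exists>z\<in>M. vless y z \<and> vless z x))"

definition meet_in :: "nat list set \<Rightarrow> nat list set \<Rightarrow> nat list" where
  "meet_in M S = (THE z. z \<in> M \<and> (\<forall>s\<in>S. vle z s) \<and>
                     (\<forall>w\<in>M. (\<forall>s\<in>S. vle w s) \<longrightarrow> vle w z))"

definition bot_in :: "nat list set \<Rightarrow> nat list" where
  "bot_in M = (THE z. z \<in> M \<and> (\<forall>w\<in>M. vle z w))"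

definition Pop :: "nat list set \<Rightarrow> nat list \<Rightarrow> nat list" where
  "Pop M x = meet_in M ({y. covered_by M y x} \<union> {x})"

definition pop_sortable :: "nat list set \<Rightarrow> nat \<Rightarrow> nat list \<Rightarrow> bool" where
  "pop_sortable M t x = ((Pop M ^^ t) x = bot_in M)"

definition vplus :: "nat \<Rightarrow> nat list \<Rightarrow> nat list \<Rightarrow> nat list" where
  "vplus n1 b b' = b @ map (\<lambda>x. x + n1) b'"

definition vsum :: "(nat \<times> nat list) list \<Rightarrow> nat \<times> nat list" where
  "vsum ps = foldl (\<lambda>(m, acc) (k, v). (m + k, vplus m acc v)) (0, []) ps"

end

theory Submission
  imports Defs
begin

text \<open>An entry \<open>b\<^sub>i\<close> of a vector in \<open>Vec n\<close> bounds all entries up to position \<open>2 b\<^sub>i + 1\<close>.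
  Hence the positions \<open>0, \<dots>, 2 b\<^sub>0 + 1\<close> form a closed block: its entries are at most \<open>b\<^sub>0\<close>, while
  all later entries are at least \<open>b\<^sub>0 + 1\<close>. Cutting it off writes \<open>b\<close> as the sum of an irreducible
  vector of size \<open>b\<^sub>0 + 1\<close> and a smaller vector, and induction gives the decomposition.

  Conversely, everything below a sum \<open>b\<^sub>1 + b\<^sub>2\<close> is again such a sum, so the principal ideal
  below \<open>b\<^sub>1 + b\<^sub>2\<close> is the product of the ideals below \<open>b\<^sub>1\<close> and \<open>b\<^sub>2\<close>. Covers, meets of
  lower covers and therefore \<open>Pop\<close> act componentwise on sums, and the bottom element of a sum
  lattice is the sum of the bottoms; so a sum is \<open>t\<close>-\<open>Pop\<close>-sortable iff each summand is.\<close>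

lemma vle_iff_nth: "vle x y \<longleftrightarrow> length x = length y \<and> (\<forall>i<length x. x ! i \<le> y ! i)"
  unfolding vle_def by (simp add: list_all2_conv_all_nth)

lemma vle_refl [simp]: "vle x x"
  by (simp add: vle_iff_nth)

lemma vle_antisym: "vle x y \<Longrightarrow> vle y x \<Longrightarrow> x = y"
  by (auto simp: vle_iff_nth intro!: nth_equalityI intro: antisym)

lemma Vec_length: "b \<in> Vec n \<Longrightarrow> length b = 2 * n"
  by (simp add: Vec_def)

lemma Vec_finite: "finite (Vec n)"
proof (rule finite_subset)
  show "Vec n \<subseteq> {xs. set xs \<subseteq> {0..<n} \<and> length xs = 2 * n}"
  proof
    fix b assume b: "b \<in> Vec n"
    have "n \<ge> 1" if "x \<in> set b" for x using b that by (cases n) (auto simp: Vec_def)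
    then show "b \<in> {xs. set xs \<subseteq> {0..<n} \<and> length xs = 2 * n}"
      using b by (fastforce simp: Vec_def in_set_conv_nth)
  qed
  show "finite {xs. set xs \<subseteq> {0..<n} \<and> length xs = 2 * n}"
    by (rule finite_lists_length_eq) simp
qed

definition is_glb :: "nat list set \<Rightarrow> nat list set \<Rightarrow> nat list \<Rightarrow> bool" where
  "is_glb M S z \<longleftrightarrow> z \<in> M \<and> (\<forall>s\<in>S. vle z s) \<and> (\<forall>w\<in>M. (\<forall>s\<in>S. vle w s) \<longrightarrow> vle w z)"

lemma meet_in_eqI: "is_glb M S z \<Longrightarrow> meet_in M S = z"
  unfolding meet_in_def by (rule the_equality) (auto simp: is_glb_def intro: vle_antisym)

text \<open>The meet of a nonempty subset of \<open>Vec n\<close> is its componentwise minimum; the defining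
  conditions of \<open>Vec n\<close> at position \<open>i\<close> only involve the entry at \<open>i\<close> and bounds on later entries,
  so they pass from the vector attaining the minimum at \<open>i\<close> to the minimum.\<close>

lemma Vec_glb_exists:
  assumes S: "S \<subseteq> Vec n" "S \<noteq> {}"
  shows "\<exists>z. is_glb (Vec n) S z"
proof -
  have fin: "finite S" using S Vec_finite finite_subset by blast
  define z where "z = map (\<lambda>i. Min ((\<lambda>s. s ! i) ` S)) [0..<2*n]"
  have lz: "length z = 2 * n" by (simp add: z_def)
  have zi: "z ! i = Min ((\<lambda>s. s ! i) ` S)" if "i < 2*n" for i
    using that by (simp add: z_def)
  have attained: "\<exists>s\<in>S. z ! i = s ! i" if "i < 2*n" for i
  proof -
    have "Min ((\<lambda>s. s ! i) ` S) \<in> (\<lambda>s. s ! i) ` S"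
      using fin S(2) by (intro Min_in) auto
    then show ?thesis using zi[OF that] by auto
  qed
  have le: "z ! i \<le> s ! i" if "i < 2*n" "s \<in> S" for i s
    using zi[OF that(1)] fin that(2) by simp
  have zV: "z \<in> Vec n"
    unfolding Vec_def
  proof (intro CollectI conjI allI impI)
    fix k assume k: "k < n"
    obtain s where "s \<in> S" "z ! (2*k+1) = s ! (2*k+1)" using attained[of "2*k+1"] k by auto
    then show "z ! (2 * k + 1) = k" using S k by (auto simp: Vec_def)
  next
    fix i assume i: "i < 2*n"
    obtain s where "s \<in> S" "z ! i = s ! i" using attained[OF i] by auto
    then show "i div 2 \<le> z ! i" "z ! i \<le> n - 1" using S i by (auto simp: Vec_def)
  next
    fix i j assume i: "i < 2*n" and j: "i + 1 \<le> j \<and> j \<le> 2 * (z ! i) + 1"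
    obtain s where s: "s \<in> S" "z ! i = s ! i" using attained[OF i] by auto
    have "s \<in> Vec n" using S s(1) by blast
    then have "s ! j \<le> s ! i" and "j < 2 * n" using i j s(2) by (auto simp: Vec_def)
    then show "z ! j \<le> z ! i" using le[OF _ s(1)] s(2) by fastforce
  qed (rule lz)
  have "is_glb (Vec n) S z"
    unfolding is_glb_def
  proof (intro conjI ballI impI)
    fix s assume "s \<in> S"
    then show "vle z s" using le S lz by (auto simp: vle_iff_nth Vec_def)
  next
    fix w assume w: "w \<in> Vec n" "\<forall>s\<in>S. vle w s"
    have lw: "length w = 2*n" using w(1) Vec_length by blast
    have "w ! i \<le> z ! i" if "i < 2*n" for i
      using w(2) that lw zi[OF that] fin S(2) by (auto simp: vle_iff_nth)
    then show "vle w z" using lw lz by (simp add: vle_iff_nth)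
  qed (rule zV)
  then show ?thesis by blast
qed

definition Vec_bot :: "nat \<Rightarrow> nat list" where
  "Vec_bot n = map (\<lambda>i. i div 2) [0..<2*n]"

lemma Vec_bot_in_Vec: "Vec_bot n \<in> Vec n"
proof -
  have "j div 2 \<le> i div 2" "j < 2 * n"
    if "i < 2*n" "Suc i \<le> j" "j \<le> Suc (2 * (i div 2))" for i j
    using that by presburger+
  then show ?thesis unfolding Vec_def Vec_bot_def by auto
qed

lemma Vec_bot_le: "b \<in> Vec n \<Longrightarrow> vle (Vec_bot n) b"
  by (auto simp: vle_iff_nth Vec_bot_def Vec_def)

lemma bot_in_Vec: "bot_in (Vec n) = Vec_bot n"
  unfolding bot_in_def
  by (rule the_equality) (auto simp: Vec_bot_in_Vec Vec_bot_le intro: vle_antisym)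

subsection \<open>Sums of vectors\<close>

lemma length_vplus [simp]: "length (vplus m b1 b2) = length b1 + length b2"
  by (simp add: vplus_def)

lemma nth_vplus_low: "length b1 = 2*m \<Longrightarrow> i < 2*m \<Longrightarrow> vplus m b1 b2 ! i = b1 ! i"
  by (simp add: vplus_def nth_append)

lemma nth_vplus_high:
  "length b1 = 2*m \<Longrightarrow> 2*m \<le> i \<Longrightarrow> i < 2*m + length b2 \<Longrightarrow> vplus m b1 b2 ! i = b2 ! (i - 2*m) + m"
  by (simp add: vplus_def nth_append)

lemma vplus_in_Vec:
  assumes b1: "b1 \<in> Vec m" and b2: "b2 \<in> Vec p"
  shows "vplus m b1 b2 \<in> Vec (m + p)"
proof -
  let ?x = "vplus m b1 b2"
  have l1: "length b1 = 2*m" and l2: "length b2 = 2*p" using b1 b2 by (auto simp: Vec_def)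
  have A1: "\<And>k. k<m \<Longrightarrow> b1 ! (2*k+1) = k"
    and B1: "\<And>i. i<2*m \<Longrightarrow> i div 2 \<le> b1 ! i \<and> b1 ! i \<le> m - 1"
    and C1: "\<And>i j. i<2*m \<Longrightarrow> i + 1 \<le> j \<Longrightarrow> j \<le> 2 * (b1 ! i) + 1 \<Longrightarrow> b1 ! j \<le> b1 ! i"
    using b1 by (auto simp: Vec_def)
  have A2: "\<And>k. k<p \<Longrightarrow> b2 ! (2*k+1) = k"
    and B2: "\<And>i. i<2*p \<Longrightarrow> i div 2 \<le> b2 ! i \<and> b2 ! i \<le> p - 1"
    and C2: "\<And>i j. i<2*p \<Longrightarrow> i + 1 \<le> j \<Longrightarrow> j \<le> 2 * (b2 ! i) + 1 \<Longrightarrow> b2 ! j \<le> b2 ! i"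
    using b2 by (auto simp: Vec_def)
  note low = nth_vplus_low[OF l1] and high = nth_vplus_high[OF l1, of _ b2, unfolded l2]
  show ?thesis
    unfolding Vec_def
  proof (intro CollectI conjI allI impI)
    show "length ?x = 2 * (m + p)" by (simp add: l1 l2)
  next
    fix k assume k: "k < m + p"
    show "?x ! (2*k+1) = k"
    proof (cases "k < m")
      case True then show ?thesis using low A1 by simp
    next
      case False
      then have "2*k+1 - 2*m = 2*(k-m)+1" by simp
      then show ?thesis using high[of "2*k+1"] A2[of "k-m"] k False by simp
    qed
  next
    fix i assume i: "i < 2*(m+p)"
    have "i div 2 \<le> ?x ! i \<and> ?x ! i \<le> m + p - 1"
    proof (cases "i < 2*m")
      case True then show ?thesis using low B1[OF True] by auto
    next
      case False
      then have "i - 2*m < 2*p" "(i - 2*m) div 2 = i div 2 - m" using i by presburger+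
      then show ?thesis using B2[of "i - 2*m"] high[of i] i False by (intro conjI; linarith)
    qed
    then show "i div 2 \<le> ?x ! i" "?x ! i \<le> m + p - 1" by auto
  next
    fix i j assume i: "i < 2*(m+p)" and j: "i + 1 \<le> j \<and> j \<le> 2 * (?x ! i) + 1"
    show "?x ! j \<le> ?x ! i"
    proof (cases "i < 2*m")
      case True
      have xi: "?x ! i = b1 ! i" using low True by simp
      have "j < 2*m" using j xi B1[OF True] True by linarith
      then show ?thesis using C1[OF True, of j] j xi low by simp
    next
      case False
      have i2: "i - 2*m < 2*p" using i False by simp
      have xi: "?x ! i = b2 ! (i - 2*m) + m" using high i False by simp
      have "p \<ge> 1" using i2 by simp
      then have "j < 2*(m+p)" using j[THEN conjunct2] xi B2[OF i2, THEN conjunct2] by arith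
      then have xj: "?x ! j = b2 ! (j - 2*m) + m" using high False j by simp
      show ?thesis using C2[OF i2, of "j - 2*m"] j xi xj False by linarith
    qed
  qed
qed

text \<open>Conversely, a vector whose first \<open>2m\<close> entries are below \<open>m\<close> is a sum: the entries from
  position \<open>2m\<close> on are at least \<open>m\<close>, since \<open>i div 2 \<le> b ! i\<close>.\<close>

lemma Vec_split_vplus:
  assumes y: "y \<in> Vec (m + p)" and small: "\<forall>i<2*m. y ! i \<le> m - 1"
  shows "take (2*m) y \<in> Vec m \<and> map (\<lambda>x. x - m) (drop (2*m) y) \<in> Vec p \<and>
         y = vplus m (take (2*m) y) (map (\<lambda>x. x - m) (drop (2*m) y))"
proof -
  have ly: "length y = 2*(m+p)" using y by (simp add: Vec_def)
  have A: "\<And>k. k<m+p \<Longrightarrow> y ! (2*k+1) = k"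
    and B: "\<And>i. i<2*(m+p) \<Longrightarrow> i div 2 \<le> y ! i \<and> y ! i \<le> m + p - 1"
    and C: "\<And>i j. i<2*(m+p) \<Longrightarrow> i + 1 \<le> j \<Longrightarrow> j \<le> 2 * (y ! i) + 1 \<Longrightarrow> y ! j \<le> y ! i"
    using y by (auto simp: Vec_def)
  define y1 where "y1 = take (2*m) y"
  define y2 where "y2 = map (\<lambda>x. x - m) (drop (2*m) y)"
  have l1: "length y1 = 2*m" and l2: "length y2 = 2*p" using ly by (simp_all add: y1_def y2_def)
  have n1: "y1 ! i = y ! i" if "i < 2*m" for i using that by (simp add: y1_def)
  have n2: "y2 ! i = y ! (2*m + i) - m" if "i < 2*p" for i using that ly by (simp add: y2_def)
  have ge: "m \<le> y ! (2*m + i)" if "i < 2*p" for i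
    using B[of "2*m+i"] that by simp
  have "map (\<lambda>x. x + m) y2 = drop (2*m) y"
    by (rule nth_equalityI) (use l2 ly n2 ge in auto)
  then have eq: "y = vplus m y1 y2" by (simp add: vplus_def y1_def)
  have v1: "y1 \<in> Vec m"
    unfolding Vec_def
  proof (intro CollectI conjI allI impI)
    fix k assume "k < m" then show "y1 ! (2*k+1) = k" using n1 A by simp
  next
    fix i assume i: "i < 2*m"
    show "i div 2 \<le> y1 ! i" "y1 ! i \<le> m - 1" using B[of i] small i n1 by simp_all
  next
    fix i j assume i: "i < 2*m" and j: "i + 1 \<le> j \<and> j \<le> 2 * (y1 ! i) + 1"
    have "j < 2*m" using j small i n1[OF i] by fastforce
    then show "y1 ! j \<le> y1 ! i" using C[of i j] i j n1[OF i] n1[of j] by simp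
  qed (rule l1)
  have v2: "y2 \<in> Vec p"
    unfolding Vec_def
  proof (intro CollectI conjI allI impI)
    fix k assume k: "k < p"
    then show "y2 ! (2*k+1) = k" using A[of "m+k"] n2[of "2*k+1"] by (simp add: algebra_simps)
  next
    fix i assume i: "i < 2*p"
    have "(2*m+i) div 2 \<le> y ! (2*m+i)" "y ! (2*m+i) \<le> m + p - 1" using B[of "2*m+i"] i by simp_all
    moreover have "(2*m+i) div 2 = m + i div 2" by simp
    ultimately show "i div 2 \<le> y2 ! i" "y2 ! i \<le> p - 1" using n2[OF i] by linarith+
  next
    fix i j assume i: "i < 2*p" and j: "i + 1 \<le> j \<and> j \<le> 2 * (y2 ! i) + 1"
    have yi: "y2 ! i = y ! (2*m+i) - m" using n2[OF i] .
    have "y ! (2*m+i) \<le> m + p - 1" using B[of "2*m+i"] i by simp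
    then have "j < 2*p" using j[THEN conjunct2] ge[OF i] yi i by arith
    moreover have "2*m + j \<le> 2 * y ! (2*m+i) + 1" using j[THEN conjunct2] yi ge[OF i] by arith
    then have "y ! (2*m+j) \<le> y ! (2*m+i)" using C[of "2*m+i" "2*m+j"] i j by simp
    ultimately show "y2 ! j \<le> y2 ! i" using n2 yi by simp
  qed (rule l2)
  show ?thesis using v1 v2 eq unfolding y1_def y2_def by blast
qed

lemma vle_vplus_iff:
  "length a1 = length c1 \<Longrightarrow> vle (vplus m a1 a2) (vplus m c1 c2) \<longleftrightarrow> vle a1 c1 \<and> vle a2 c2"
  unfolding vle_def vplus_def
  by (auto simp: list_all2_append list_all2_map1 list_all2_map2 dest: list_all2_lengthD)

lemma vplus_eq_iff:
  "length a1 = length c1 \<Longrightarrow> vplus m a1 a2 = vplus m c1 c2 \<longleftrightarrow> a1 = c1 \<and> a2 = c2"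
  by (auto simp: vplus_def inj_map_eq_map inj_on_def)

lemma Vec_bot_vplus: "vplus m (Vec_bot m) (Vec_bot p) = Vec_bot (m + p)"
proof (rule nth_equalityI)
  fix i assume "i < length (vplus m (Vec_bot m) (Vec_bot p))"
  then have i: "i < 2*(m+p)" by (simp add: Vec_bot_def)
  have "\<not> i < 2*m \<Longrightarrow> (i - 2*m) div 2 + m = i div 2" by presburger
  then show "vplus m (Vec_bot m) (Vec_bot p) ! i = Vec_bot (m + p) ! i"
    using i by (cases "i < 2*m") (simp_all add: vplus_def Vec_bot_def nth_append)
qed (simp add: Vec_bot_def)

lemma Vec_below_vplus_split:
  assumes b1: "b1 \<in> Vec m" and y: "y \<in> Vec (m + p)" and le: "vle y (vplus m b1 b2)"
  shows "\<exists>y1\<in>Vec m. \<exists>y2\<in>Vec p. y = vplus m y1 y2"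
proof -
  have "\<forall>i<2*m. y ! i \<le> m - 1"
  proof (intro allI impI)
    fix i assume i: "i < 2*m"
    have "y ! i \<le> vplus m b1 b2 ! i" using le i y Vec_length by (auto simp: vle_iff_nth)
    also have "\<dots> = b1 ! i" using nth_vplus_low[OF Vec_length[OF b1] i] .
    also have "\<dots> \<le> m - 1" using b1 i by (simp add: Vec_def)
    finally show "y ! i \<le> m - 1" .
  qed
  from Vec_split_vplus[OF y this] show ?thesis by blast
qed

subsection \<open>Covers and \<open>Pop\<close> act componentwise on sums\<close>

lemma vle_vplus_Vec_iff:
  "a1 \<in> Vec m \<Longrightarrow> c1 \<in> Vec m \<Longrightarrow> vle (vplus m a1 a2) (vplus m c1 c2) \<longleftrightarrow> vle a1 c1 \<and> vle a2 c2"
  by (rule vle_vplus_iff) (simp add: Vec_length)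

lemma vplus_eq_Vec_iff:
  "a1 \<in> Vec m \<Longrightarrow> c1 \<in> Vec m \<Longrightarrow> vplus m a1 a2 = vplus m c1 c2 \<longleftrightarrow> a1 = c1 \<and> a2 = c2"
  by (rule vplus_eq_iff) (simp add: Vec_length)

lemma covered_by_iff:
  "covered_by M y x \<longleftrightarrow>
     y \<in> M \<and> x \<in> M \<and> vless y x \<and> (\<forall>z\<in>M. vle y z \<longrightarrow> vle z x \<longrightarrow> z = y \<or> z = x)"
  by (auto simp: covered_by_def vless_def)

definition lower_covers :: "nat list set \<Rightarrow> nat list \<Rightarrow> nat list set" where
  "lower_covers M x = {y. covered_by M y x} \<union> {x}"

lemma Pop_eq_meet_lower_covers: "Pop M x = meet_in M (lower_covers M x)"
  by (simp add: Pop_def lower_covers_def)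

lemma Pop_is_glb: "b \<in> Vec n \<Longrightarrow> is_glb (Vec n) (lower_covers (Vec n) b) (Pop (Vec n) b)"
  using Vec_glb_exists[of "lower_covers (Vec n) b" n] meet_in_eqI
  by (fastforce simp: Pop_eq_meet_lower_covers lower_covers_def covered_by_def)

lemma Pop_in_Vec: "b \<in> Vec n \<Longrightarrow> Pop (Vec n) b \<in> Vec n"
  using Pop_is_glb is_glb_def by blast

lemma funpow_Pop_in_Vec: "b \<in> Vec n \<Longrightarrow> (Pop (Vec n) ^^ t) b \<in> Vec n"
  by (induction t) (auto simp: Pop_in_Vec)

context
  fixes m p b1 b2
  assumes b1: "b1 \<in> Vec m" and b2: "b2 \<in> Vec p"
begin

lemma covered_by_vplus_iff:
  assumes y1: "y1 \<in> Vec m" and y2: "y2 \<in> Vec p"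
  shows "covered_by (Vec (m + p)) (vplus m y1 y2) (vplus m b1 b2) \<longleftrightarrow>
    covered_by (Vec m) y1 b1 \<and> y2 = b2 \<or> y1 = b1 \<and> covered_by (Vec p) y2 b2"
proof -
  have interval: "(\<forall>z\<in>Vec (m + p). vle (vplus m y1 y2) z \<longrightarrow> vle z (vplus m b1 b2) \<longrightarrow> P z) \<longleftrightarrow>
    (\<forall>z1\<in>Vec m. \<forall>z2\<in>Vec p. vle y1 z1 \<longrightarrow> vle y2 z2 \<longrightarrow> vle z1 b1 \<longrightarrow> vle z2 b2 \<longrightarrow> P (vplus m z1 z2))"
    (is "?lhs \<longleftrightarrow> ?rhs") for P
  proof
    assume lhs: ?lhs
    show ?rhs
    proof (intro ballI impI)
      fix z1 z2 assume "z1 \<in> Vec m" "z2 \<in> Vec p" "vle y1 z1" "vle y2 z2" "vle z1 b1" "vle z2 b2"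
      then show "P (vplus m z1 z2)" using lhs vplus_in_Vec y1 b1 by (simp add: vle_vplus_Vec_iff)
    qed
  next
    assume rhs: ?rhs
    show ?lhs
    proof (intro ballI impI)
      fix z assume z: "z \<in> Vec (m + p)" "vle (vplus m y1 y2) z" "vle z (vplus m b1 b2)"
      then obtain z1 z2 where "z1 \<in> Vec m" "z2 \<in> Vec p" "z = vplus m z1 z2"
        using Vec_below_vplus_split[OF b1] by blast
      then show "P z" using rhs z y1 b1 by (simp add: vle_vplus_Vec_iff)
    qed
  qed
  show ?thesis
    unfolding covered_by_iff[of _ _ "vplus m b1 b2"] interval
    using y1 y2 b1 b2 vplus_in_Vec
    by (auto simp: covered_by_iff vless_def vle_vplus_Vec_iff vplus_eq_Vec_iff intro: vle_antisym)
qed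

lemma lower_bound_lower_covers_vplus_iff:
  assumes w1: "w1 \<in> Vec m" and w2: "w2 \<in> Vec p"
  shows "(\<forall>s\<in>lower_covers (Vec (m + p)) (vplus m b1 b2). vle (vplus m w1 w2) s) \<longleftrightarrow>
    (\<forall>s\<in>lower_covers (Vec m) b1. vle w1 s) \<and> (\<forall>s\<in>lower_covers (Vec p) b2. vle w2 s)"
    (is "?lhs \<longleftrightarrow> ?rhs")
proof
  assume lhs: ?lhs
  have "vle w1 c" if "covered_by (Vec m) c b1" for c
    using lhs[rule_format, of "vplus m c b2"] that covered_by_vplus_iff[of c b2] w1 b2
    by (auto simp: lower_covers_def covered_by_def vle_vplus_Vec_iff)
  moreover have "vle w2 c" if "covered_by (Vec p) c b2" for c
    using lhs[rule_format, of "vplus m b1 c"] that covered_by_vplus_iff[of b1 c] w1 b1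
    by (auto simp: lower_covers_def covered_by_def vle_vplus_Vec_iff)
  moreover have "vle w1 b1" "vle w2 b2"
    using lhs w1 b1 by (auto simp: lower_covers_def vle_vplus_Vec_iff)
  ultimately show ?rhs by (auto simp: lower_covers_def)
next
  assume rhs: ?rhs
  show ?lhs
  proof
    fix s assume s: "s \<in> lower_covers (Vec (m + p)) (vplus m b1 b2)"
    show "vle (vplus m w1 w2) s"
    proof (cases "s = vplus m b1 b2")
      case True
      then show ?thesis using rhs w1 b1 by (simp add: lower_covers_def vle_vplus_Vec_iff)
    next
      case False
      then have cov: "covered_by (Vec (m + p)) s (vplus m b1 b2)"
        using s by (simp add: lower_covers_def)
      then obtain s1 s2 where "s1 \<in> Vec m" "s2 \<in> Vec p" "s = vplus m s1 s2"
        using Vec_below_vplus_split[OF b1, of s p b2] by (auto simp: covered_by_def vless_def)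
      then show ?thesis
        using cov covered_by_vplus_iff rhs w1 by (auto simp: lower_covers_def vle_vplus_Vec_iff)
    qed
  qed
qed

lemma Pop_vplus: "Pop (Vec (m + p)) (vplus m b1 b2) = vplus m (Pop (Vec m) b1) (Pop (Vec p) b2)"
proof -
  define z1 where "z1 = Pop (Vec m) b1"
  define z2 where "z2 = Pop (Vec p) b2"
  have g1: "is_glb (Vec m) (lower_covers (Vec m) b1) z1" and g2: "is_glb (Vec p) (lower_covers (Vec p) b2) z2"
    unfolding z1_def z2_def using Pop_is_glb b1 b2 by blast+
  then have z1: "z1 \<in> Vec m" and z2: "z2 \<in> Vec p" by (auto simp: is_glb_def)
  have "is_glb (Vec (m + p)) (lower_covers (Vec (m + p)) (vplus m b1 b2)) (vplus m z1 z2)"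
    unfolding is_glb_def
  proof (intro conjI)
    show "vplus m z1 z2 \<in> Vec (m + p)" using vplus_in_Vec[OF z1 z2] .
    show "\<forall>s\<in>lower_covers (Vec (m + p)) (vplus m b1 b2). vle (vplus m z1 z2) s"
      using lower_bound_lower_covers_vplus_iff[OF z1 z2] g1 g2 by (simp add: is_glb_def)
    show "\<forall>w\<in>Vec (m + p). (\<forall>s\<in>lower_covers (Vec (m + p)) (vplus m b1 b2). vle w s) \<longrightarrow>
      vle w (vplus m z1 z2)"
    proof (intro ballI impI)
      fix w assume w: "w \<in> Vec (m + p)" and lb: "\<forall>s\<in>lower_covers (Vec (m + p)) (vplus m b1 b2). vle w s"
      then obtain w1 w2 where w12: "w1 \<in> Vec m" "w2 \<in> Vec p" "w = vplus m w1 w2"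
        using Vec_below_vplus_split[OF b1, of w p b2] by (auto simp: lower_covers_def)
      then have "vle w1 z1" "vle w2 z2"
        using lb lower_bound_lower_covers_vplus_iff g1 g2 by (auto simp: is_glb_def)
      then show "vle w (vplus m z1 z2)" using w12 z1 by (simp add: vle_vplus_Vec_iff)
    qed
  qed
  then have "meet_in (Vec (m + p)) (lower_covers (Vec (m + p)) (vplus m b1 b2)) = vplus m z1 z2"
    by (rule meet_in_eqI)
  then show ?thesis by (simp add: Pop_eq_meet_lower_covers z1_def z2_def)
qed

end

lemma funpow_Pop_vplus:
  "b1 \<in> Vec m \<Longrightarrow> b2 \<in> Vec p \<Longrightarrow>
    (Pop (Vec (m + p)) ^^ t) (vplus m b1 b2) = vplus m ((Pop (Vec m) ^^ t) b1) ((Pop (Vec p) ^^ t) b2)"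
  by (induction t arbitrary: b1 b2) (simp_all add: funpow_Suc_right Pop_vplus Pop_in_Vec del: funpow.simps)

lemma pop_sortable_vplus_iff:
  assumes b1: "b1 \<in> Vec m" and b2: "b2 \<in> Vec p"
  shows "pop_sortable (Vec (m + p)) t (vplus m b1 b2) \<longleftrightarrow>
    pop_sortable (Vec m) t b1 \<and> pop_sortable (Vec p) t b2"
proof -
  have "length ((Pop (Vec m) ^^ t) b1) = length (Vec_bot m)"
    using funpow_Pop_in_Vec[OF b1] Vec_bot_in_Vec Vec_length by metis
  then show ?thesis
    unfolding pop_sortable_def bot_in_Vec funpow_Pop_vplus[OF b1 b2] Vec_bot_vplus[symmetric]
    by (rule vplus_eq_iff)
qed

lemma foldl_vsum_shift:
  "foldl (\<lambda>(m, acc) (k, v). (m + k, vplus m acc v)) (a, acc) ps =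
    (a + fst (vsum ps), acc @ map (\<lambda>x. x + a) (snd (vsum ps)))"
proof (induction ps arbitrary: a acc)
  case (Cons kv ps)
  let ?F = "\<lambda>(m, acc) (k, v). (m + k, vplus m acc v)"
  obtain k v where kv: "kv = (k, v)" by (cases kv)
  have "vsum (kv # ps) = foldl ?F (k, vplus 0 [] v) ps"
    by (simp add: vsum_def kv)
  also have "\<dots> = (k + fst (vsum ps), vplus 0 [] v @ map (\<lambda>x. x + k) (snd (vsum ps)))"
    by (rule Cons.IH)
  finally have vsum_kv: "vsum (kv # ps) = (k + fst (vsum ps), v @ map (\<lambda>x. x + k) (snd (vsum ps)))"
    by (simp add: vplus_def)
  have "foldl ?F (a, acc) (kv # ps) = foldl ?F (a + k, vplus a acc v) ps"
    by (simp add: kv)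
  also have "\<dots> = (a + k + fst (vsum ps), vplus a acc v @ map (\<lambda>x. x + (a + k)) (snd (vsum ps)))"
    by (rule Cons.IH)
  also have "\<dots> = (a + fst (vsum (kv # ps)), acc @ map (\<lambda>x. x + a) (snd (vsum (kv # ps))))"
    by (simp add: vsum_kv vplus_def add.assoc add.commute[of k a])
  finally show ?case .
qed (simp add: vsum_def)

lemma vsum_Cons: "vsum ((k, v) # ps) = (k + fst (vsum ps), vplus k v (snd (vsum ps)))"
  using foldl_vsum_shift[of k "vplus 0 [] v" ps] by (simp add: vsum_def vplus_def)

lemma fst_vsum: "fst (vsum ps) = (\<Sum>(k, v) \<leftarrow> ps. k)"
  by (induction ps) (auto simp: vsum_Cons, simp add: vsum_def)

lemma vsum_in_Vec: "\<forall>(k, v) \<in> set ps. v \<in> Vec k \<Longrightarrow> snd (vsum ps) \<in> Vec (fst (vsum ps))"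
  by (induction ps) (auto simp: vsum_Cons vplus_in_Vec, simp add: vsum_def Vec_def)

lemma pop_sortable_Vec_0: "pop_sortable (Vec 0) t []"
proof -
  have "[] \<in> Vec 0" by (simp add: Vec_def)
  then have "length ((Pop (Vec 0) ^^ t) []) = 0" using Vec_length[OF funpow_Pop_in_Vec] by simp
  then show ?thesis by (simp add: pop_sortable_def bot_in_Vec Vec_bot_def)
qed

lemma pop_sortable_vsum_iff:
  "\<forall>(k, v) \<in> set ps. v \<in> Vec k \<Longrightarrow>
    pop_sortable (Vec (fst (vsum ps))) t (snd (vsum ps)) \<longleftrightarrow> (\<forall>(k, v) \<in> set ps. pop_sortable (Vec k) t v)"
proof (induction ps)
  case Nil
  then show ?case by (simp add: vsum_def pop_sortable_Vec_0)
next
  case (Cons kv ps)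
  obtain k v where kv: "kv = (k, v)" by (cases kv)
  have v: "v \<in> Vec k" and ps: "\<forall>(k, v) \<in> set ps. v \<in> Vec k" using Cons.prems kv by auto
  show ?case
    using Cons.IH[OF ps] pop_sortable_vplus_iff[OF v vsum_in_Vec[OF ps]] by (simp add: kv vsum_Cons)
qed

subsection \<open>Decomposition into irreducible vectors\<close>

lemma irreducible_vec_iff:
  assumes "v \<in> Vec k" "k \<ge> 1"
  shows "irreducible_vec k v \<longleftrightarrow> v ! 0 = k - 1"
proof -
  have "v ! (2 * (k - 1) + 1) = k - 1" using assms by (simp add: Vec_def)
  moreover have "2 * (k - 1) + 1 = 2 * k - 1" using assms(2) by simp
  ultimately show ?thesis by (simp add: irreducible_vec_def)
qed

lemma Vec_first_block:
  assumes b: "b \<in> Vec n" and n: "n \<ge> 1"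
  shows "b ! 0 + 1 \<le> n" and "\<forall>i < 2 * (b ! 0 + 1). b ! i \<le> b ! 0"
proof -
  have "b ! 0 \<le> n - 1" using b n by (simp add: Vec_def)
  then show "b ! 0 + 1 \<le> n" using n by linarith
  show "\<forall>i < 2 * (b ! 0 + 1). b ! i \<le> b ! 0"
  proof (intro allI impI)
    fix i assume "i < 2 * (b ! 0 + 1)"
    moreover have "0 < 2 * n" using n by simp
    ultimately show "b ! i \<le> b ! 0" using b by (cases "i = 0") (auto simp: Vec_def)
  qed
qed

lemma Vec_irreducible_decomposition:
  assumes "b \<in> Vec n" "n \<ge> 1"
  shows "\<exists>ps. ps \<noteq> [] \<and> (\<forall>(k, v) \<in> set ps. k \<ge> 1 \<and> v \<in> Vec k \<and> irreducible_vec k v) \<and>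
           (\<Sum>(k, v) \<leftarrow> ps. k) = n \<and> snd (vsum ps) = b"
  using assms
proof (induction n arbitrary: b rule: less_induct)
  case (less n)
  define m where "m = b ! 0 + 1"
  have mn: "m \<le> n" and small: "\<forall>i<2*m. b ! i \<le> m - 1"
    using Vec_first_block[OF less.prems] by (simp_all add: m_def)
  show ?case
  proof (cases "m = n")
    case True
    then have "irreducible_vec n b" using irreducible_vec_iff less.prems by (simp add: m_def)
    moreover have "snd (vsum [(n, b)]) = b" by (simp add: vsum_def vplus_def)
    ultimately show ?thesis using less.prems by (intro exI[of _ "[(n, b)]"]) auto
  next
    case False
    define p where "p = n - m"
    define b1 where "b1 = take (2*m) b"
    define b2 where "b2 = map (\<lambda>x. x - m) (drop (2*m) b)"
    have n_eq: "m + p = n" and "p < n" "p \<ge> 1" using False mn by (auto simp: m_def p_def)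
    then have b12: "b1 \<in> Vec m" "b2 \<in> Vec p" "b = vplus m b1 b2"
      using Vec_split_vplus[of b m p] less.prems small by (simp_all add: b1_def b2_def)
    obtain ps where ps: "ps \<noteq> []" "\<forall>(k, v) \<in> set ps. k \<ge> 1 \<and> v \<in> Vec k \<and> irreducible_vec k v"
      "(\<Sum>(k, v) \<leftarrow> ps. k) = p" "snd (vsum ps) = b2"
      using less.IH[OF \<open>p < n\<close> b12(2) \<open>p \<ge> 1\<close>] by blast
    have "m \<ge> 1" "b1 ! 0 = m - 1" by (simp_all add: b1_def m_def)
    then have "irreducible_vec m b1" using irreducible_vec_iff[OF b12(1)] by simp
    moreover have "snd (vsum ((m, b1) # ps)) = b" using ps(4) b12(3) by (simp add: vsum_Cons)
    ultimately show ?thesis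
      using ps b12(1) n_eq \<open>m \<ge> 1\<close> by (intro exI[of _ "(m, b1) # ps"]) simp
  qed
qed

theorem lemma3p13:
  fixes n :: nat and b :: "nat list"
  assumes "n \<ge> 1" and "b \<in> Vec n"
  shows "\<exists>ps :: (nat \<times> nat list) list.
           ps \<noteq> [] \<and>
           (\<forall>(k, v) \<in> set ps. k \<ge> 1 \<and> v \<in> Vec k \<and> irreducible_vec k v) \<and>
           (\<Sum>(k, v) \<leftarrow> ps. k) = n \<and>
           snd (vsum ps) = b \<and>
           (\<forall>t :: nat. pop_sortable (Vec n) t b \<longleftrightarrow>
               (\<forall>(k, v) \<in> set ps. pop_sortable (Vec k) t v))"
proof -
  obtain ps where ps: "ps \<noteq> []" "\<forall>(k, v) \<in> set ps. k \<ge> 1 \<and> v \<in> Vec k \<and> irreducible_vec k v"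
    "(\<Sum>(k, v) \<leftarrow> ps. k) = n" "snd (vsum ps) = b"
    using Vec_irreducible_decomposition[OF assms(2,1)] by blast
  then have "vsum ps = (n, b)" by (simp add: fst_vsum prod_eq_iff)
  moreover have "\<forall>(k, v) \<in> set ps. v \<in> Vec k" using ps(2) by blast
  ultimately have "pop_sortable (Vec n) t b \<longleftrightarrow> (\<forall>(k, v) \<in> set ps. pop_sortable (Vec k) t v)" for t
    using pop_sortable_vsum_iff[of ps t] by simp
  with ps show ?thesis by blast
qed

end
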